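(* Let $(b,c)$ be a connected canonically compactifiable weighted graph over $X$. If $f\in\mathcal A$ satisfies $\mathcal L f=0$ on $X$, then $\|f\|_\infty=\|\hat f|_{\partial X}\|_\infty$.
   Context: Let $X$ be a countably infinite set. A weighted graph $(b,c)$ over $X$ consists of a symmetric $b:X\times X\to[0,\infty)$ with $b(x,x)=0$ and $\sum_{y}b(x,y)<\infty$ for all $x$, and $c:X\to[0,\infty)$; connected means any two distinct vertices are joined by a finite path of pairwise distinct vertices with consecutive ones satisfying $b>0$. The formal Laplacian acts on bounded $f$ by $\mathcal Lf(x)=\sum_y b(x,y)(f(x)-f(y))+c(x)f(x)$. Let $\widetilde Q(f)=\frac12\sum_{x,y}b(x,y)|f(x)-f(y)|^2+\sum_x c(x)|f(x)|^2$ and $\widetilde D=\{f:\widetilde Q(f)<\infty\}$; the graph is canonically compactifiable if $\widetilde D\subseteq\ell^\infty(X)$. Then $\mathcal A$ is the sup-norm closure of $\widetilde D$ in $\ell^\infty(X)$, $\mathcal A^+$ the smallest $C^*$-subalgebra of $\ell^\infty(X)$ containing $\mathcal A$ and $1$, $K$ the set of characters (nonzero multiplicative linear functionals) of $\mathcal A^+$ with the weak-$*$ topology, $\hat g(\gamma)=\gamma(g)$ for $g\in\mathcal A^+$, $\gamma\in K$. Via $x\mapsto\delta_x$ ($\delta_x(f)=f(x)$) we view $X\subseteq K$ and set $\partial X=K\setminus X$. *)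

theory Defs
  imports "HOL-Analysis.Analysis"
begin

definition weighted_graph :: "('x \<Rightarrow> 'x \<Rightarrow> real) \<Rightarrow> ('x \<Rightarrow> real) \<Rightarrow> bool" where
  "weighted_graph b c \<longleftrightarrow>
     (\<forall>x y. b x y \<ge> 0) \<and> (\<forall>x y. b x y = b y x) \<and> (\<forall>x. b x x = 0) \<and>
     (\<forall>x. (b x) summable_on UNIV) \<and> (\<forall>x. c x \<ge> 0)"

definition graph_connected :: "('x \<Rightarrow> 'x \<Rightarrow> real) \<Rightarrow> bool" where
  "graph_connected b \<longleftrightarrow>
     (\<forall>x y. x \<noteq> y \<longrightarrow> (\<exists>ps. distinct ps \<and> length ps \<ge> 2 \<and> hd ps = x \<and> last ps = y \<and>
        (\<forall>i. Suc i < length ps \<longrightarrow> b (ps ! i) (ps ! Suc i) > 0)))"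

text \<open>Functions of finite energy: the energy
  Q(f) = 1/2 sum b(x,y)|f x - f y|^2 + sum c(x)|f x|^2 (nonnegative terms) is finite.\<close>
definition Dtilde :: "('x \<Rightarrow> 'x \<Rightarrow> real) \<Rightarrow> ('x \<Rightarrow> real) \<Rightarrow> ('x \<Rightarrow> complex) set" where
  "Dtilde b c = {f. (\<lambda>(x,y). b x y * (cmod (f x - f y))\<^sup>2) summable_on UNIV \<and>
                    (\<lambda>x. c x * (cmod (f x))\<^sup>2) summable_on UNIV}"

definition ell_inf :: "('x \<Rightarrow> complex) set" where
  "ell_inf = {f. bounded (range f)}"

definition sup_norm :: "('x \<Rightarrow> complex) \<Rightarrow> real" where
  "sup_norm f = (SUP x. cmod (f x))"

definition canonically_compactifiable :: "('x \<Rightarrow> 'x \<Rightarrow> real) \<Rightarrow> ('x \<Rightarrow> real) \<Rightarrow> bool" where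
  "canonically_compactifiable b c \<longleftrightarrow> Dtilde b c \<subseteq> ell_inf"

definition sup_closure :: "('x \<Rightarrow> complex) set \<Rightarrow> ('x \<Rightarrow> complex) set" where
  "sup_closure S = {f \<in> ell_inf. \<forall>e>0. \<exists>g\<in>S. \<forall>x. cmod (f x - g x) < e}"

definition algA :: "('x \<Rightarrow> 'x \<Rightarrow> real) \<Rightarrow> ('x \<Rightarrow> real) \<Rightarrow> ('x \<Rightarrow> complex) set" where
  "algA b c = sup_closure (Dtilde b c)"

definition unital_cstar_subalg :: "('x \<Rightarrow> complex) set \<Rightarrow> bool" where
  "unital_cstar_subalg S \<longleftrightarrow> S \<subseteq> ell_inf \<and> (\<lambda>_. 1) \<in> S \<and>
     (\<forall>f\<in>S. \<forall>g\<in>S. (\<lambda>x. f x + g x) \<in> S \<and> (\<lambda>x. f x * g x) \<in> S) \<and>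
     (\<forall>f\<in>S. \<forall>a::complex. (\<lambda>x. a * f x) \<in> S) \<and>
     (\<forall>f\<in>S. (\<lambda>x. cnj (f x)) \<in> S) \<and>
     sup_closure S \<subseteq> S"

definition algAplus :: "('x \<Rightarrow> 'x \<Rightarrow> real) \<Rightarrow> ('x \<Rightarrow> real) \<Rightarrow> ('x \<Rightarrow> complex) set" where
  "algAplus b c = \<Inter>{S. unital_cstar_subalg S \<and> algA b c \<subseteq> S}"

text \<open>Characters of an algebra S: nonzero multiplicative linear functionals on S,
  represented extensionally (value 0 outside S).\<close>
definition characters :: "('x \<Rightarrow> complex) set \<Rightarrow> (('x \<Rightarrow> complex) \<Rightarrow> complex) set" where
  "characters S = {\<gamma>.
     (\<forall>f\<in>S. \<forall>g\<in>S. \<gamma> (\<lambda>x. f x + g x) = \<gamma> f + \<gamma> g \<and> \<gamma> (\<lambda>x. f x * g x) = \<gamma> f * \<gamma> g) \<and>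
     (\<forall>f\<in>S. \<forall>a. \<gamma> (\<lambda>x. a * f x) = a * \<gamma> f) \<and>
     (\<exists>f\<in>S. \<gamma> f \<noteq> 0) \<and>
     (\<forall>f. f \<notin> S \<longrightarrow> \<gamma> f = 0)}"

definition point_eval :: "('x \<Rightarrow> complex) set \<Rightarrow> 'x \<Rightarrow> (('x \<Rightarrow> complex) \<Rightarrow> complex)" where
  "point_eval S x = (\<lambda>f. if f \<in> S then f x else 0)"

definition boundary :: "('x \<Rightarrow> 'x \<Rightarrow> real) \<Rightarrow> ('x \<Rightarrow> real) \<Rightarrow> (('x \<Rightarrow> complex) \<Rightarrow> complex) set" where
  "boundary b c = characters (algAplus b c) - range (point_eval (algAplus b c))"

definition formal_laplacian :: "('x \<Rightarrow> 'x \<Rightarrow> real) \<Rightarrow> ('x \<Rightarrow> real) \<Rightarrow> ('x \<Rightarrow> complex) \<Rightarrow> 'x \<Rightarrow> complex" where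
  "formal_laplacian b c f x = (\<Sum>\<^sub>\<infinity>y. complex_of_real (b x y) * (f x - f y)) + complex_of_real (c x) * f x"

end

theory Submission
  imports Defs
begin

text \<open>Every character of \<open>\<A>\<^sup>+\<close> is bounded by the sup norm, which gives \<open>\<le>\<close>. For \<open>\<ge>\<close>: by the
  maximum principle on the connected graph, \<open>\<bar>f\<bar>\<close> does not attain \<open>\<parallel>f\<parallel>\<^sub>\<infinity>\<close> unless \<open>f\<close> is constant,
  so \<open>\<bar>f\<bar>\<close> comes arbitrarily close to \<open>\<parallel>f\<parallel>\<^sub>\<infinity>\<close> on infinitely many vertices. A cluster point of the
  point evaluations along the filter "\<open>x \<rightarrow> \<infinity>\<close> and \<open>\<bar>f x\<bar> \<rightarrow> \<parallel>f\<parallel>\<^sub>\<infinity>\<close>" is a character that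
  vanishes on finitely supported functions, hence lies in \<open>\<partial>X\<close>, and has \<open>\<bar>\<gamma> f\<bar> = \<parallel>f\<parallel>\<^sub>\<infinity>\<close>.\<close>

lemma ell_inf_iff: "f \<in> ell_inf \<longleftrightarrow> (\<exists>B. \<forall>x. cmod (f x) \<le> B)"
  unfolding ell_inf_def bounded_iff by auto

lemma norm_le_sup_norm: "g \<in> ell_inf \<Longrightarrow> cmod (g x) \<le> sup_norm g"
  unfolding sup_norm_def
  by (rule cSUP_upper) (auto simp: ell_inf_def bounded_iff bdd_above_def)

lemma unital_cstar_subalg_ell_inf: "unital_cstar_subalg (ell_inf :: ('x \<Rightarrow> complex) set)"
proof -
  have add: "(\<lambda>x. f x + g x) \<in> ell_inf" and mult: "(\<lambda>x. f x * g x) \<in> ell_inf"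
    if "f \<in> ell_inf" "g \<in> ell_inf" for f g :: "'x \<Rightarrow> complex"
  proof -
    from that obtain B C where B: "\<And>x. cmod (f x) \<le> B" and C: "\<And>x. cmod (g x) \<le> C"
      by (auto simp: ell_inf_iff)
    have "cmod (f x + g x) \<le> B + C" for x
      by (rule norm_triangle_le) (use B C add_mono in blast)
    then show "(\<lambda>x. f x + g x) \<in> ell_inf" by (auto simp: ell_inf_iff)
    have "cmod (f x * g x) \<le> B * C" for x
      unfolding norm_mult by (rule mult_mono) (use B C order_trans[OF norm_ge_zero B] in auto)
    then show "(\<lambda>x. f x * g x) \<in> ell_inf" by (auto simp: ell_inf_iff)
  qed
  have "(\<lambda>x. a * f x) \<in> ell_inf" if "f \<in> ell_inf" for f :: "'x \<Rightarrow> complex" and a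
  proof -
    from that obtain B where "\<forall>x. cmod (f x) \<le> B" by (auto simp: ell_inf_iff)
    then have "\<forall>x. cmod (a * f x) \<le> cmod a * B" by (simp add: mult_left_mono norm_mult)
    then show ?thesis by (auto simp: ell_inf_iff)
  qed
  moreover have "sup_closure ell_inf \<subseteq> ell_inf"
    unfolding sup_closure_def by blast
  ultimately show ?thesis
    unfolding unital_cstar_subalg_def using add mult by (auto simp: ell_inf_iff)
qed

lemma sup_closure_mono: "S \<subseteq> T \<Longrightarrow> sup_closure S \<subseteq> sup_closure T"
  unfolding sup_closure_def by blast

lemma unital_cstar_subalgD:
  assumes "unital_cstar_subalg S"
  shows "S \<subseteq> ell_inf" "(\<lambda>_. 1) \<in> S"
    "f \<in> S \<Longrightarrow> g \<in> S \<Longrightarrow> (\<lambda>x. f x + g x) \<in> S"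
    "f \<in> S \<Longrightarrow> g \<in> S \<Longrightarrow> (\<lambda>x. f x * g x) \<in> S"
    "f \<in> S \<Longrightarrow> (\<lambda>x. a * f x) \<in> S"
    "sup_closure S \<subseteq> S"
  using assms unfolding unital_cstar_subalg_def by blast+

lemma unital_cstar_subalg_Inter:
  assumes "F \<noteq> {}" and "\<And>S. S \<in> F \<Longrightarrow> unital_cstar_subalg S"
  shows "unital_cstar_subalg (\<Inter>F)"
proof -
  have "sup_closure (\<Inter>F) \<subseteq> S" if "S \<in> F" for S
    using sup_closure_mono[of "\<Inter>F" S] unital_cstar_subalgD(6)[OF assms(2)[OF that]] that
    by blast
  then show ?thesis
    using assms unfolding unital_cstar_subalg_def by blast
qed

lemma unital_cstar_subalg_algAplus: "unital_cstar_subalg (algAplus b c)"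
  unfolding algAplus_def
  by (rule unital_cstar_subalg_Inter)
    (use unital_cstar_subalg_ell_inf in \<open>auto simp: algA_def sup_closure_def\<close>)

lemma algA_subset_algAplus: "algA b c \<subseteq> algAplus b c"
  unfolding algAplus_def by blast

lemma character_add: "\<gamma> \<in> characters S \<Longrightarrow> f \<in> S \<Longrightarrow> g \<in> S \<Longrightarrow> \<gamma> (\<lambda>x. f x + g x) = \<gamma> f + \<gamma> g"
  and character_mult: "\<gamma> \<in> characters S \<Longrightarrow> f \<in> S \<Longrightarrow> g \<in> S \<Longrightarrow> \<gamma> (\<lambda>x. f x * g x) = \<gamma> f * \<gamma> g"
  and character_scaleC: "\<gamma> \<in> characters S \<Longrightarrow> f \<in> S \<Longrightarrow> \<gamma> (\<lambda>x. a * f x) = a * \<gamma> f"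
  unfolding characters_def by blast+

lemma character_one:
  assumes "unital_cstar_subalg S" and "\<gamma> \<in> characters S"
  shows "\<gamma> (\<lambda>_. 1) = 1"
proof -
  from assms(2) obtain f where f: "f \<in> S" "\<gamma> f \<noteq> 0" by (auto simp: characters_def)
  have "\<gamma> f = \<gamma> (\<lambda>_. 1) * \<gamma> f"
    using character_mult[OF assms(2) unital_cstar_subalgD(2)[OF assms(1)] f(1)] by simp
  with f(2) show ?thesis by simp
qed

lemma geometric_sum_in_unital_cstar_subalg:
  assumes S: "unital_cstar_subalg S" and "g \<in> S"
  shows "(\<lambda>x. \<Sum>k<n. g x ^ k) \<in> S"
proof -
  have powers: "(\<lambda>x. g x ^ k) \<in> S" for k
    by (induction k) (use unital_cstar_subalgD(2,4)[OF S] assms(2) in auto)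
  show ?thesis
  proof (induction n)
    case 0
    show ?case using unital_cstar_subalgD(5)[OF S unital_cstar_subalgD(2)[OF S], of 0] by simp
  next
    case (Suc n)
    show ?case using unital_cstar_subalgD(3)[OF S Suc powers[of n]] by simp
  qed
qed

text \<open>Neumann series: the partial sums of \<open>\<Sum> g\<^sup>k\<close> converge uniformly to \<open>1 / (1 - g)\<close>.\<close>
lemma inverse_one_minus_in_unital_cstar_subalg:
  assumes S: "unital_cstar_subalg S" and gS: "g \<in> S"
    and g_le: "\<And>x. cmod (g x) \<le> r" and "r < 1"
  shows "(\<lambda>x. 1 / (1 - g x)) \<in> S"
proof -
  have r0: "0 \<le> r" using g_le[of undefined] norm_ge_zero order_trans by blast
  have denom: "1 - r \<le> cmod (1 - g x)" for x
    using g_le[of x] norm_triangle_ineq2[of 1 "g x"] by simp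
  have "\<exists>p\<in>S. \<forall>x. cmod (1 / (1 - g x) - p x) < e" if "e > 0" for e
  proof -
    obtain n where n: "r ^ n < e * (1 - r)"
      using real_arch_pow_inv[of "e * (1 - r)" r] \<open>e > 0\<close> \<open>r < 1\<close> by auto
    have "cmod (1 / (1 - g x) - (\<Sum>k<n. g x ^ k)) < e" for x
    proof -
      have "g x \<noteq> 1" using g_le[of x] \<open>r < 1\<close> by auto
      then have "1 / (1 - g x) - (\<Sum>k<n. g x ^ k) = g x ^ n / (1 - g x)"
        by (simp add: sum_gp_strict field_simps)
      also have "cmod \<dots> \<le> r ^ n / (1 - r)"
        unfolding norm_divide norm_power
        using power_mono[OF g_le norm_ge_zero] denom r0 \<open>r < 1\<close> by (intro frac_le) auto
      also have "\<dots> < e" using n \<open>r < 1\<close> by (simp add: field_simps)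
      finally show ?thesis .
    qed
    then show ?thesis
      using geometric_sum_in_unital_cstar_subalg[OF S gS, of n] by (intro bexI) auto
  qed
  moreover have "(\<lambda>x. 1 / (1 - g x)) \<in> ell_inf"
    using denom \<open>r < 1\<close> by (auto simp: ell_inf_iff norm_divide intro!: exI[of _ "1 / (1 - r)"] frac_le)
  ultimately show ?thesis
    using unital_cstar_subalgD(6)[OF S] unfolding sup_closure_def by blast
qed

text \<open>If \<open>\<bar>\<gamma> g\<bar>\<close> exceeded \<open>\<parallel>g\<parallel>\<close>, then \<open>1 - g / \<gamma> g\<close> would be invertible in \<open>S\<close>
  but annihilated by \<open>\<gamma>\<close>.\<close>
lemma character_norm_le_sup_norm:
  assumes S: "unital_cstar_subalg S" and \<gamma>: "\<gamma> \<in> characters S" and gS: "g \<in> S"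
  shows "cmod (\<gamma> g) \<le> sup_norm g"
proof (rule ccontr)
  assume "\<not> ?thesis"
  then have less: "sup_norm g < cmod (\<gamma> g)" by simp
  define l where "l = \<gamma> g"
  define G where "G = (\<lambda>x. (1 / l) * g x)"
  have l0: "l \<noteq> 0"
    using less norm_le_sup_norm[of g] unital_cstar_subalgD(1)[OF S] gS norm_ge_zero
    by (metis l_def norm_zero not_le order_trans subsetD)
  have GS: "G \<in> S" unfolding G_def using unital_cstar_subalgD(5)[OF S gS] .
  have "cmod (G x) \<le> sup_norm g / cmod l" for x
    using norm_le_sup_norm[of g x] unital_cstar_subalgD(1)[OF S] gS l0
    by (auto simp: G_def norm_mult norm_divide divide_right_mono)
  moreover have "sup_norm g / cmod l < 1" using less l0 by (simp add: l_def)
  ultimately have uS: "(\<lambda>x. 1 / (1 - G x)) \<in> S"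
    by (rule inverse_one_minus_in_unital_cstar_subalg[OF S GS])
  define h where "h = (\<lambda>x. 1 + (-1) * G x)"
  have one: "(\<lambda>_. 1) \<in> S" using unital_cstar_subalgD(2)[OF S] .
  have mS: "(\<lambda>x. (-1) * G x) \<in> S" using unital_cstar_subalgD(5)[OF S GS] .
  have hS: "h \<in> S" unfolding h_def using unital_cstar_subalgD(3)[OF S one mS] .
  have "\<gamma> h = 0"
    using character_add[OF \<gamma> one mS] character_scaleC[OF \<gamma> GS, of "-1"]
      character_scaleC[OF \<gamma> gS, of "1 / l"] character_one[OF S \<gamma>] l0
    by (simp add: h_def G_def l_def)
  moreover have "h x * (1 / (1 - G x)) = 1" for x
  proof -
    have "G x \<noteq> 1" using \<open>cmod (G x) \<le> _\<close> \<open>sup_norm g / cmod l < 1\<close> by (metis norm_one not_le)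
    then show ?thesis by (simp add: h_def)
  qed
  ultimately show False
    using character_mult[OF \<gamma> hS uS] character_one[OF S \<gamma>] by simp
qed

lemma norm_diff_power2: "(cmod (z - w))\<^sup>2 = (cmod z)\<^sup>2 - 2 * Re (z * cnj w) + (cmod w)\<^sup>2"
proof -
  have "(cmod (z - w))\<^sup>2 = (Re z - Re w)\<^sup>2 + (Im z - Im w)\<^sup>2" by (simp add: cmod_power2)
  also have "\<dots> = ((Re z)\<^sup>2 + (Im z)\<^sup>2) - 2 * (Re z * Re w + Im z * Im w) + ((Re w)\<^sup>2 + (Im w)\<^sup>2)"
    by (simp add: power2_eq_square algebra_simps)
  finally show ?thesis by (simp add: cmod_power2)
qed

text \<open>Multiplying \<open>\<L>f(x) = 0\<close> by \<open>cnj (f x)\<close> and taking real parts writes \<open>0\<close> as a sum of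
  the nonnegative terms \<open>b(x,y) (\<bar>f x\<bar>\<^sup>2 - Re (f y cnj (f x)))\<close> and \<open>c(x) \<bar>f x\<bar>\<^sup>2\<close>.\<close>
lemma harmonic_at_maximum_neighbour_eq:
  assumes wg: "weighted_graph b c"
    and max: "\<And>z. cmod (f z) \<le> cmod (f x)"
    and harmonic: "formal_laplacian b c f x = 0" and "b x y > 0"
  shows "f y = f x"
proof -
  define a where "a = f x"
  define M where "M = cmod a"
  have b0: "\<And>z. b x z \<ge> 0" and "c x \<ge> 0" and "(b x) summable_on UNIV"
    using wg by (auto simp: weighted_graph_def)
  define T where "T = (\<lambda>z. complex_of_real (b x z) * (a - f z))"
  have majorant: "(\<lambda>z. b x z * (2 * M)) summable_on UNIV"
    using \<open>(b x) summable_on UNIV\<close> by (rule summable_on_cmult_left)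
  have T_le: "norm (T z) \<le> b x z * (2 * M)" for z
  proof -
    have "cmod (a - f z) \<le> 2 * M"
      using norm_triangle_ineq4[of a "f z"] max[of z] by (simp add: a_def M_def)
    then show ?thesis
      using b0[of z] by (simp add: T_def norm_mult mult_left_mono)
  qed
  have "T summable_on UNIV"
    using abs_summable_summable Infinite_Sum.abs_summable_on_comparison_test'[OF majorant T_le] by blast
  then have "((\<lambda>z. Re (T z * cnj a)) has_sum Re (infsum T UNIV * cnj a)) UNIV"
    by (intro has_sum_Re has_sum_cmult_left has_sum_infsum)
  moreover have "Re (infsum T UNIV * cnj a) = - (c x * M\<^sup>2)"
  proof -
    have "infsum T UNIV = - (complex_of_real (c x) * a)"
      using harmonic by (simp add: formal_laplacian_def T_def a_def eq_neg_iff_add_eq_0)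
    then show ?thesis
      unfolding M_def cmod_power2 by (simp add: power2_eq_square algebra_simps)
  qed
  moreover have summand: "Re (T z * cnj a) = b x z * (M\<^sup>2 - Re (f z * cnj a))" for z
    unfolding T_def M_def cmod_power2 by (simp add: power2_eq_square algebra_simps)
  moreover have "Re (T z * cnj a) \<ge> 0" for z
  proof -
    have "Re (f z * cnj a) \<le> cmod (f z) * M"
      using complex_Re_le_cmod[of "f z * cnj a"] by (simp add: norm_mult M_def)
    also have "\<dots> \<le> M\<^sup>2"
      using max[of z] by (simp add: power2_eq_square M_def a_def mult_right_mono)
    finally show ?thesis unfolding summand using b0[of z] by simp
  qed
  ultimately have "Re (T y * cnj a) = 0"
    using \<open>c x \<ge> 0\<close> by (intro nonneg_has_sum_le_0D) auto
  then have "Re (f y * cnj a) = M\<^sup>2" unfolding summand using \<open>b x y > 0\<close> by simp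
  then have "(cmod (f y - a))\<^sup>2 \<le> 0"
    using power_mono[OF max[of y] norm_ge_zero] by (simp add: norm_diff_power2 M_def a_def)
  then show ?thesis by (simp add: a_def)
qed

lemma harmonic_attains_max_imp_constant:
  assumes wg: "weighted_graph b c" and "graph_connected b"
    and harmonic: "\<And>x. formal_laplacian b c f x = 0"
    and max: "\<And>z. cmod (f z) \<le> cmod (f x0)"
  shows "f y = f x0"
proof (cases "y = x0")
  case False
  then obtain ps where ps: "length ps \<ge> 2" "hd ps = x0" "last ps = y"
    and edges: "\<And>i. Suc i < length ps \<Longrightarrow> b (ps ! i) (ps ! Suc i) > 0"
    using \<open>graph_connected b\<close> unfolding graph_connected_def by metis
  have "i < length ps \<Longrightarrow> f (ps ! i) = f x0" for i
  proof (induction i)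
    case 0
    then show ?case using ps(2) by (simp add: hd_conv_nth)
  next
    case (Suc i)
    then have "f (ps ! i) = f x0" by simp
    with harmonic_at_maximum_neighbour_eq[OF wg _ harmonic edges[OF Suc.prems]] max
    show ?case by metis
  qed
  moreover have "ps \<noteq> []" using ps(1) by auto
  ultimately show ?thesis
    using ps(3) last_conv_nth[of ps] by (metis diff_less length_greater_0_conv zero_less_one)
qed simp

lemma indicator_in_Dtilde:
  assumes wg: "weighted_graph b c"
  shows "(\<lambda>y. if y = x then (1::complex) else 0) \<in> Dtilde b c"
proof -
  define d where "d = (\<lambda>y. if y = x then (1::complex) else 0)"
  have bsym: "\<And>y z. b y z = b z y" and "b x x = 0" and bs: "(b x) summable_on UNIV"
    using wg by (auto simp: weighted_graph_def)
  have row: "(\<lambda>p. if fst p = x then b x (snd p) else 0) summable_on UNIV"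
  proof -
    have "(\<lambda>p. b x (snd p)) summable_on (Pair x ` UNIV)"
      by (subst summable_on_reindex) (auto simp: o_def bs inj_on_def)
    then show ?thesis
      by (rule summable_on_cong_neutral[THEN iffD1, rotated -1]) auto
  qed
  have column: "(\<lambda>p. if snd p = x then b (fst p) x else 0) summable_on UNIV"
  proof -
    have "(\<lambda>p. b (fst p) x) summable_on ((\<lambda>y. (y, x)) ` UNIV)"
      by (subst summable_on_reindex) (auto simp: o_def bsym[of _ x] bs inj_on_def)
    then show ?thesis
      by (rule summable_on_cong_neutral[THEN iffD1, rotated -1]) auto
  qed
  have "(\<lambda>(y,z). b y z * (cmod (d y - d z))\<^sup>2) =
      (\<lambda>p. (if fst p = x then b x (snd p) else 0) + (if snd p = x then b (fst p) x else 0))"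
    by (auto simp: d_def \<open>b x x = 0\<close>)
  then have "(\<lambda>(y,z). b y z * (cmod (d y - d z))\<^sup>2) summable_on UNIV"
    using summable_on_add[OF row column] by simp
  moreover have "(\<lambda>y. c y * (cmod (d y))\<^sup>2) summable_on UNIV"
  proof -
    have "(\<lambda>y. c y * (cmod (d y))\<^sup>2) summable_on {x}" by simp
    then show ?thesis
      by (rule summable_on_cong_neutral[THEN iffD1, rotated -1]) (auto simp: d_def)
  qed
  ultimately show ?thesis unfolding Dtilde_def d_def by simp
qed

lemma cluster_point_in_closed:
  assumes "inf (nhds z) (filtermap h F) \<noteq> bot" and "closed C"
    and "eventually (\<lambda>x. h x \<in> C) F"
  shows "z \<in> C"
proof (rule ccontr)
  assume "z \<notin> C"
  then have "eventually (\<lambda>y. y \<in> - C) (nhds z)"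
    using \<open>closed C\<close> by (intro eventually_nhds_in_open) auto
  moreover have "eventually (\<lambda>y. y \<in> C) (filtermap h F)"
    using assms(3) by (simp add: eventually_filtermap)
  ultimately have "eventually (\<lambda>_. False) (inf (nhds z) (filtermap h F))"
    unfolding eventually_inf by blast
  with assms(1) show False by (simp add: eventually_False)
qed

text \<open>A cluster point of the point evaluations along \<open>F\<close>, taken in the product space
  \<open>\<Pi> g. cball 0 \<parallel>g\<parallel>\<close> (compact by Tychonoff's theorem), is a character: the character identities
  cut out closed sets that contain every point evaluation.\<close>
lemma character_at_filter:
  fixes S :: "('x \<Rightarrow> complex) set"
  assumes S: "unital_cstar_subalg S" and "F \<noteq> bot"
  obtains \<gamma> where "\<gamma> \<in> characters S"
    and "\<And>g C. g \<in> S \<Longrightarrow> closed C \<Longrightarrow> eventually (\<lambda>x. g x \<in> C) F \<Longrightarrow> \<gamma> g \<in> C"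
proof -
  define K where "K = PiE UNIV (\<lambda>g. cball (0::complex) (if g \<in> S then sup_norm g else 0))"
  have "compactin (product_topology (\<lambda>_. euclidean) UNIV) K"
    unfolding K_def compactin_PiE by simp
  then have "compact K"
    by (simp add: euclidean_product_topology)
  moreover have "point_eval S x \<in> K" for x
    using unital_cstar_subalgD(1)[OF S]
    by (auto simp: K_def point_eval_def intro!: norm_le_sup_norm)
  moreover have "filtermap (point_eval S) F \<noteq> bot"
    using \<open>F \<noteq> bot\<close> by (simp add: filtermap_bot_iff)
  ultimately obtain \<gamma> where cluster: "inf (nhds \<gamma>) (filtermap (point_eval S) F) \<noteq> bot"
    unfolding compact_filter by (force simp: eventually_filtermap)
  have closed_coord: "closed {\<delta>. \<delta> g \<in> C}" if "closed C" for g :: "'x \<Rightarrow> complex" and C :: "complex set"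
    using continuous_on_closed_vimage[OF closed_UNIV, of "\<lambda>\<delta>::('x \<Rightarrow> complex) \<Rightarrow> complex. \<delta> g"] that
    by (simp add: vimage_def)
  have limit_law: "P \<gamma> = Q \<gamma>"
    if "continuous_on UNIV P" "continuous_on UNIV Q" "\<And>x. P (point_eval S x) = Q (point_eval S x)"
    for P Q :: "(('x \<Rightarrow> complex) \<Rightarrow> complex) \<Rightarrow> complex"
    using cluster_point_in_closed[OF cluster closed_Collect_eq[OF that(1,2)]] that(3) by simp
  have "\<gamma> \<in> characters S"
    unfolding characters_def
  proof (intro CollectI conjI ballI allI impI)
    fix f g assume "f \<in> S" "g \<in> S"
    then show "\<gamma> (\<lambda>x. f x + g x) = \<gamma> f + \<gamma> g"
      using unital_cstar_subalgD(3)[OF S]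
      by (intro limit_law[where P="\<lambda>\<delta>. \<delta> (\<lambda>x. f x + g x)" and Q="\<lambda>\<delta>. \<delta> f + \<delta> g"])
        (auto intro!: continuous_on_add simp: point_eval_def)
    show "\<gamma> (\<lambda>x. f x * g x) = \<gamma> f * \<gamma> g"
      using \<open>f \<in> S\<close> \<open>g \<in> S\<close> unital_cstar_subalgD(4)[OF S]
      by (intro limit_law[where P="\<lambda>\<delta>. \<delta> (\<lambda>x. f x * g x)" and Q="\<lambda>\<delta>. \<delta> f * \<delta> g"])
        (auto intro!: continuous_on_mult simp: point_eval_def)
  next
    fix f a assume "f \<in> S"
    then show "\<gamma> (\<lambda>x. a * f x) = a * \<gamma> f"
      using unital_cstar_subalgD(5)[OF S]
      by (intro limit_law[where P="\<lambda>\<delta>. \<delta> (\<lambda>x. a * f x)" and Q="\<lambda>\<delta>. a * \<delta> f"])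
        (auto intro!: continuous_on_mult simp: point_eval_def)
  next
    have "\<gamma> (\<lambda>_. 1) = 1"
      using unital_cstar_subalgD(2)[OF S]
      by (intro limit_law[where P="\<lambda>\<delta>. \<delta> (\<lambda>_. 1)" and Q="\<lambda>_. 1"])
        (auto simp: point_eval_def)
    then show "\<exists>f\<in>S. \<gamma> f \<noteq> 0" using unital_cstar_subalgD(2)[OF S] by force
  next
    fix f assume "f \<notin> S"
    then show "\<gamma> f = 0"
      by (intro limit_law[where P="\<lambda>\<delta>. \<delta> f" and Q="\<lambda>_. 0"]) (auto simp: point_eval_def)
  qed
  moreover have "\<gamma> g \<in> C"
    if "g \<in> S" "closed C" "eventually (\<lambda>x. g x \<in> C) F" for g C
    using cluster_point_in_closed[OF cluster closed_coord[OF that(2)]] that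
    by (simp add: point_eval_def)
  ultimately show thesis by (rule that)
qed

lemma indicator_in_algAplus:
  assumes "weighted_graph b c"
  shows "(\<lambda>y. if y = x then (1::complex) else 0) \<in> algAplus b c"
proof -
  have "(\<lambda>y. if y = x then (1::complex) else 0) \<in> ell_inf"
    by (auto simp: ell_inf_iff intro!: exI[of _ 1])
  then have "(\<lambda>y. if y = x then (1::complex) else 0) \<in> algA b c"
    using indicator_in_Dtilde[OF assms] unfolding algA_def sup_closure_def by force
  then show ?thesis using algA_subset_algAplus by blast
qed

lemma character_vanishing_at_infinity_in_boundary:
  assumes wg: "weighted_graph b c" and \<gamma>: "\<gamma> \<in> characters (algAplus b c)"
    and vanish: "\<And>g. g \<in> algAplus b c \<Longrightarrow> eventually (\<lambda>x. g x = 0) cofinite \<Longrightarrow> \<gamma> g = 0"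
  shows "\<gamma> \<in> boundary b c"
proof -
  have "\<gamma> \<noteq> point_eval (algAplus b c) x" for x
  proof -
    define d where "d = (\<lambda>y. if y = x then (1::complex) else 0)"
    have "d \<in> algAplus b c" unfolding d_def by (rule indicator_in_algAplus[OF wg])
    moreover have "eventually (\<lambda>y. d y = 0) cofinite"
      by (simp add: d_def eventually_cofinite)
    ultimately have "\<gamma> d = 0" by (rule vanish)
    moreover have "point_eval (algAplus b c) x d = 1"
      using \<open>d \<in> algAplus b c\<close> by (simp add: point_eval_def d_def)
    ultimately show ?thesis by auto
  qed
  with \<gamma> show ?thesis unfolding boundary_def by blast
qed

lemma harmonic_near_sup_infinite:
  assumes wg: "weighted_graph b c" and "graph_connected b" and "infinite (UNIV :: 'x set)"
    and "f \<in> ell_inf" and harmonic: "\<And>x. formal_laplacian b c f x = 0" and "e > 0"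
  shows "infinite {x :: 'x. sup_norm f - e < cmod (f x)}"
proof
  define A where "A = {x. sup_norm f - e < cmod (f x)}"
  assume "finite {x. sup_norm f - e < cmod (f x)}"
  then have "finite A" by (simp add: A_def)
  have "bdd_above (range (\<lambda>x. cmod (f x)))"
    using norm_le_sup_norm[OF \<open>f \<in> ell_inf\<close>] by (intro bdd_aboveI2)
  moreover have "sup_norm f - e < (SUP x. cmod (f x))"
    using \<open>e > 0\<close> by (simp add: sup_norm_def)
  ultimately have "A \<noteq> {}"
    using less_cSUP_iff[of UNIV] by (auto simp: A_def)
  then have "Max ((\<lambda>x. cmod (f x)) ` A) \<in> (\<lambda>x. cmod (f x)) ` A"
    using \<open>finite A\<close> by (intro Max_in) auto
  then obtain x0 where "x0 \<in> A" and x0_max: "Max ((\<lambda>x. cmod (f x)) ` A) = cmod (f x0)"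
    by auto
  have "cmod (f y) \<le> cmod (f x0)" for y
  proof (cases "y \<in> A")
    case True
    then show ?thesis using x0_max \<open>finite A\<close> Max_ge by (metis finite_imageI image_eqI)
  next
    case False
    then show ?thesis using \<open>x0 \<in> A\<close> by (auto simp: A_def)
  qed
  then have "f y = f x0" for y
    using harmonic_attains_max_imp_constant[OF wg \<open>graph_connected b\<close> harmonic] by blast
  then have "A = UNIV" using \<open>x0 \<in> A\<close> unfolding A_def by (metis UNIV_eq_I mem_Collect_eq)
  with \<open>finite A\<close> \<open>infinite UNIV\<close> show False by simp
qed

lemma inf_cofinite_filtercomap_nhds_neq_bot:
  fixes h :: "'a \<Rightarrow> 'b::metric_space"
  assumes "\<And>e. e > 0 \<Longrightarrow> infinite {x. dist (h x) z < e}"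
  shows "inf cofinite (filtercomap h (nhds z)) \<noteq> bot"
proof
  assume "inf cofinite (filtercomap h (nhds z)) = bot"
  then obtain Q R where Q: "eventually Q cofinite" and R: "eventually R (filtercomap h (nhds z))"
    and QR: "\<And>x. Q x \<Longrightarrow> R x \<Longrightarrow> False"
    unfolding trivial_limit_def eventually_inf by blast
  from R obtain T where "open T" "z \<in> T" and T: "\<And>x. h x \<in> T \<Longrightarrow> R x"
    unfolding eventually_filtercomap_nhds by blast
  obtain e where "e > 0" and "ball z e \<subseteq> T"
    using \<open>open T\<close> \<open>z \<in> T\<close> by (rule openE)
  then have "\<And>x. dist (h x) z < e \<Longrightarrow> R x"
    using T by (auto simp: dist_commute)
  then have "{x. dist (h x) z < e} \<subseteq> {x. \<not> Q x}" using QR by blast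
  moreover have "finite {x. \<not> Q x}" using Q by (simp add: eventually_cofinite)
  ultimately show False using assms[OF \<open>e > 0\<close>] finite_subset by blast
qed

lemma norm_eq_limit_at_cluster_value:
  fixes g :: "'a \<Rightarrow> complex"
  assumes cluster: "\<And>C. closed C \<Longrightarrow> eventually (\<lambda>x. g x \<in> C) F \<Longrightarrow> z \<in> C"
    and lim: "((\<lambda>x. cmod (g x)) \<longlongrightarrow> M) F"
  shows "cmod z = M"
proof -
  have "closed {w. dist (cmod w) M \<le> e}" for e
    by (intro closed_Collect_le continuous_on_dist continuous_on_norm continuous_on_id
        continuous_on_const)
  then have "z \<in> {w. dist (cmod w) M \<le> e}" if "e > 0" for e
    by (rule cluster) (use tendstoD[OF lim that] in \<open>auto elim: eventually_mono\<close>)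
  then have "dist (cmod z) M \<le> 0 + e" if "e > 0" for e
    using that by simp
  then show ?thesis
    using field_le_epsilon[of "dist (cmod z) M" 0] by simp
qed

theorem mainTheorem12:
  fixes b :: "'x \<Rightarrow> 'x \<Rightarrow> real" and c :: "'x \<Rightarrow> real" and f :: "'x \<Rightarrow> complex"
  assumes "countable (UNIV :: 'x set)" and "infinite (UNIV :: 'x set)"
    and "weighted_graph b c" and "graph_connected b"
    and "canonically_compactifiable b c"
    and "f \<in> algA b c"
    and "\<forall>x. formal_laplacian b c f x = 0"
  shows "sup_norm f = (SUP \<gamma>\<in>boundary b c. cmod (\<gamma> f))"
proof -
  let ?S = "algAplus b c"
  define M where "M = sup_norm f"
  define F where "F = inf cofinite (filtercomap (\<lambda>x. cmod (f x)) (nhds M))"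
  have fS: "f \<in> ?S" and fE: "f \<in> ell_inf"
    using assms(6) algA_subset_algAplus unfolding algA_def sup_closure_def by blast+
  have "{x. M - e < cmod (f x)} \<subseteq> {x. dist (cmod (f x)) M < e}" for e
    using norm_le_sup_norm[OF fE] by (auto simp: M_def dist_real_def)
  then have "F \<noteq> bot"
    unfolding F_def using harmonic_near_sup_infinite[OF assms(3,4,2) fE] assms(7)
    by (intro inf_cofinite_filtercomap_nhds_neq_bot) (metis M_def finite_subset)
  then obtain \<gamma> where \<gamma>: "\<gamma> \<in> characters ?S"
    and cluster: "\<And>g C. g \<in> ?S \<Longrightarrow> closed C \<Longrightarrow> eventually (\<lambda>x. g x \<in> C) F \<Longrightarrow> \<gamma> g \<in> C"
    using character_at_filter[OF unital_cstar_subalg_algAplus] by blast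
  have "\<gamma> \<in> boundary b c"
    using \<gamma> cluster[of _ "{0}"] filter_leD[of F cofinite]
    by (intro character_vanishing_at_infinity_in_boundary[OF assms(3)]) (auto simp: F_def)
  moreover have "cmod (\<gamma> f) = M"
  proof (rule norm_eq_limit_at_cluster_value[where g = f and F = F])
    show "((\<lambda>x. cmod (f x)) \<longlongrightarrow> M) F"
      unfolding F_def by (rule tendsto_mono[OF inf_le2 filterlim_filtercomap])
  qed (use cluster[OF fS] in blast)
  moreover have "cmod (\<gamma>' f) \<le> M" if "\<gamma>' \<in> boundary b c" for \<gamma>'
    using character_norm_le_sup_norm[OF unital_cstar_subalg_algAplus _ fS] that
    by (simp add: boundary_def M_def)
  ultimately show ?thesis
    unfolding M_def by (intro cSup_eq_maximum[symmetric]) (force, auto)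
qed

end
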